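(* Let $f_0,f_1,f_2\in\mathbb{C}[[z]]$ be in general position and let $R_j^{[n]}$ be as in the context. For $n\in\mathbb{N}$ put $k_2:=\deg R_1^{[n]}$, $k_1:=\deg R_2^{[n]}$, $k_0:=\deg R_3^{[n]}$ and $\mathbf{k}^{[n]}:=(k_0,k_1,k_2)$. Then $|\mathbf{k}^{[n]}|=k_0+k_1+k_2=n-1$, $$R_1^{[n]}f_2+R_2^{[n]}f_1+R_3^{[n]}f_0=O(z^{n+1}),$$ and $(R_3^{[n]},R_2^{[n]},R_1^{[n]})$ is a tuple of Hermite–Padé polynomials of type I for $[f_0,f_1,f_2]$ and the multiindex $\mathbf{k}^{[n]}$, with order of tangency $|\mathbf{k}^{[n]}|+2=n+1$.
   Context: For $g\in\mathbb{C}[[z]]$, $g=O(z^N)$ means the coefficients of $z^0,\dots,z^{N-1}$ vanish. For $\mathbf{k}=(k_0,\dots,k_m)\in\mathbb{Z}_+^{m+1}$, $|\mathbf{k}|=\sum k_j$, a tuple of polynomials $(Q_0,\dots,Q_m)$, not all zero, with $\deg Q_j\le k_j$ and $\sum_j Q_jf_j=O(z^{|\mathbf{k}|+m})$ is a tuple of Hermite–Padé polynomials of type I for $[f_0,\dots,f_m]$ and $\mathbf{k}$ ($|\mathbf{k}|+m$ is the order of tangency). Construction ($m=2$): put $f_j^{[0]}:=f_j$. For $n\ge0$: $c_j^{[n]}$ is the constant term of $f_j^{[n]}$, $a^{[n]}:=-c_2^{[n]}/c_1^{[n]}$, $b^{[n]}:=-c_1^{[n]}/c_0^{[n]}$, $f_2^{[n+1]}:=f_0^{[n]}$,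 $f_1^{[n+1]}:=z^{-1}(f_2^{[n]}+a^{[n]}f_1^{[n]})$, $f_0^{[n+1]}:=z^{-1}(f_1^{[n]}+b^{[n]}f_0^{[n]})$. Let $M^{[n]}:=\begin{pmatrix}0&0&z\\1&a^{[n]}&0\\0&1&b^{[n]}\end{pmatrix}$ and $A^{[n]}:=M^{[n]}\cdots M^{[0]}$, whose third row is $(R_1^{[n]},R_2^{[n]},R_3^{[n]})$. General position: all $c_j^{[n]}\neq0$, and for every $n\ge0$ and every entry of $A^{[n+1]}=M^{[n+1]}A^{[n]}$ (a sum of at most two products of an entry of $M^{[n+1]}$ and an entry of $A^{[n]}$), the degree of the entry equals the maximum of the degrees of these products (zero polynomial has degree $-\infty$). *)

theory Defs
  imports "HOL-Computational_Algebra.Computational_Algebra" "HOL-Library.Extended_Real"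
begin

type_synonym triple = "complex fps \<times> complex fps \<times> complex fps"

definition bigO_z :: "complex fps \<Rightarrow> nat \<Rightarrow> bool" where
  "bigO_z g N \<longleftrightarrow> (\<forall>i<N. fps_nth g i = 0)"

definition pdeg :: "complex poly \<Rightarrow> ereal" where
  "pdeg p = (if p = 0 then -\<infinity> else ereal (real (degree p)))"

definition hermite_pade_I ::
  "complex fps list \<Rightarrow> nat list \<Rightarrow> complex poly list \<Rightarrow> bool" where
  "hermite_pade_I fs ks Qs \<longleftrightarrow>
     length fs = length ks \<and> length Qs = length fs \<and> fs \<noteq> [] \<and>
     (\<exists>j<length Qs. Qs ! j \<noteq> 0) \<and>
     (\<forall>j<length Qs. degree (Qs ! j) \<le> ks ! j) \<and>
     bigO_z (\<Sum>j<length Qs. fps_of_poly (Qs ! j) * fs ! j)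
            (sum_list ks + (length fs - 1))"

text \<open>One step of the construction. Triples are (f_0, f_1, f_2).
  z^{-1} g is fps_shift 1 g (the constant term of g is zero by construction).\<close>
definition hp_a :: "triple \<Rightarrow> complex" where
  "hp_a t = (case t of (f0, f1, f2) \<Rightarrow> - fps_nth f2 0 / fps_nth f1 0)"

definition hp_b :: "triple \<Rightarrow> complex" where
  "hp_b t = (case t of (f0, f1, f2) \<Rightarrow> - fps_nth f1 0 / fps_nth f0 0)"

definition hp_step :: "triple \<Rightarrow> triple" where
  "hp_step t = (case t of (f0, f1, f2) \<Rightarrow>
     (fps_shift 1 (f1 + fps_const (hp_b t) * f0),
      fps_shift 1 (f2 + fps_const (hp_a t) * f1),
      f0))"

definition hp_iter :: "triple \<Rightarrow> nat \<Rightarrow> triple" where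
  "hp_iter t n = (hp_step ^^ n) t"

text \<open>3x3 polynomial matrices as functions on indices 0,1,2.\<close>
type_synonym pmat = "nat \<Rightarrow> nat \<Rightarrow> complex poly"

definition pmat_mult :: "pmat \<Rightarrow> pmat \<Rightarrow> pmat" where
  "pmat_mult A B = (\<lambda>i j. \<Sum>k<3. A i k * B k j)"

definition hp_M :: "triple \<Rightarrow> nat \<Rightarrow> pmat" where
  "hp_M t n = (\<lambda>i j.
     [[0, 0, [:0, 1:]],
      [1, [:hp_a (hp_iter t n):], 0],
      [0, 1, [:hp_b (hp_iter t n):]]] ! i ! j)"

fun hp_A :: "triple \<Rightarrow> nat \<Rightarrow> pmat" where
  "hp_A t 0 = hp_M t 0"
| "hp_A t (Suc n) = pmat_mult (hp_M t (Suc n)) (hp_A t n)"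

text \<open>General position: all constant terms nonzero, and no degree drop in
  A^{[n+1]} = M^{[n+1]} A^{[n]} (products with zero M-entry have degree -infinity
  and do not affect the maximum).\<close>
definition general_position :: "triple \<Rightarrow> bool" where
  "general_position t \<longleftrightarrow>
     (\<forall>n. case hp_iter t n of (g0, g1, g2) \<Rightarrow>
            fps_nth g0 0 \<noteq> 0 \<and> fps_nth g1 0 \<noteq> 0 \<and> fps_nth g2 0 \<noteq> 0) \<and>
     (\<forall>n i j. i < 3 \<longrightarrow> j < 3 \<longrightarrow>
        pdeg (hp_A t (Suc n) i j) =
          Max ((\<lambda>k. pdeg (hp_M t (Suc n) i k * hp_A t n k j)) ` {..<3}))"

end

theory Submission imports Defs begin

text \<open>Write \<open>v[n]\<close> for the column \<open>(f\<^sub>2[n], f\<^sub>1[n], f\<^sub>0[n])\<close>. The recursion for the \<open>f\<^sub>j[n]\<close> reads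
  \<open>M[n] v[n] = z v[n+1]\<close>, hence \<open>A[n] v[0] = z\<^sup>n\<^sup>+\<^sup>1 v[n+1]\<close>, and the third row of this identity
  is the claimed order of tangency. For the degrees, general position turns \<open>A[n+1] = M[n+1] A[n]\<close>
  into the recursion \<open>(d\<^sub>0, d\<^sub>1, d\<^sub>2) \<mapsto> (d\<^sub>2 + 1, max d\<^sub>0 d\<^sub>1, max d\<^sub>1 d\<^sub>2)\<close> for the degrees of a
  column of \<open>A[n]\<close>. Its orbits reach the periodic profile \<open>(\<lfloor>m/3\<rfloor> + 1, \<lfloor>(m+2)/3\<rfloor>, \<lfloor>(m+1)/3\<rfloor>)\<close>
  within two steps, so the third row of \<open>A[n]\<close> has degrees \<open>\<lfloor>(n+1)/3\<rfloor>, \<lfloor>n/3\<rfloor>, \<lfloor>(n-1)/3\<rfloor>\<close>,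
  which sum to \<open>n - 1\<close>.\<close>

lemma hp_iter_Suc: "hp_iter t (Suc n) = hp_step (hp_iter t n)"
  by (simp add: hp_iter_def)

lemma sum_lessThan_3:
  fixes f :: "nat \<Rightarrow> 'a::comm_monoid_add"
  shows "(\<Sum>k<3. f k) = f 0 + f 1 + f 2"
  by (simp add: numeral_3_eq_3 numeral_2_eq_2 lessThan_Suc add_ac)

lemma fps_X_mult_fps_shift_1:
  fixes g :: "'a::comm_ring_1 fps"
  assumes "g $ 0 = 0"
  shows "fps_X * fps_shift 1 g = g"
proof (rule fps_ext)
  show "(fps_X * fps_shift 1 g) $ n = g $ n" for n
    using assms by (cases n) auto
qed

lemma bigO_z_fps_X_power_mult: "bigO_z (fps_X ^ N * g) N"
  by (simp add: bigO_z_def fps_X_power_mult_nth)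

lemma hermite_pade_I_3I:
  assumes "Q0 \<noteq> 0"
    and "bigO_z (fps_of_poly Q0 * f0 + fps_of_poly Q1 * f1 + fps_of_poly Q2 * f2)
                (degree Q0 + degree Q1 + degree Q2 + 2)"
  shows "hermite_pade_I [f0, f1, f2] [degree Q0, degree Q1, degree Q2] [Q0, Q1, Q2]"
  using assms unfolding hermite_pade_I_def
  by (simp only: list.size) (auto simp: less_Suc_eq add_ac)

definition hp_vec :: "triple \<Rightarrow> nat \<Rightarrow> nat \<Rightarrow> complex fps" where
  "hp_vec t n = (case hp_iter t n of (g0, g1, g2) \<Rightarrow> (!) [g2, g1, g0])"

lemma hp_vec_0: "hp_vec (f0, f1, f2) 0 = (!) [f2, f1, f0]"
  by (simp add: hp_vec_def hp_iter_def)

lemma general_position_const_terms: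
  assumes "general_position t" "hp_iter t n = (g0, g1, g2)"
  shows "g0 $ 0 \<noteq> 0" "g1 $ 0 \<noteq> 0" "g2 $ 0 \<noteq> 0"
proof -
  have "case hp_iter t n of (g0, g1, g2) \<Rightarrow> g0 $ 0 \<noteq> 0 \<and> g1 $ 0 \<noteq> 0 \<and> g2 $ 0 \<noteq> 0"
    using assms(1) unfolding general_position_def by (rule conjunct1[THEN spec])
  then show "g0 $ 0 \<noteq> 0" "g1 $ 0 \<noteq> 0" "g2 $ 0 \<noteq> 0"
    using assms(2) by simp_all
qed

lemma hp_M_mult_hp_vec:
  assumes "general_position t" "i < 3"
  shows "(\<Sum>k<3. fps_of_poly (hp_M t n i k) * hp_vec t n k) = fps_X * hp_vec t (Suc n) i"
proof -
  obtain g0 g1 g2 where g: "hp_iter t n = (g0, g1, g2)" by (cases "hp_iter t n")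
  note c = general_position_const_terms[OF assms(1) g]
  have "i = 0 \<or> i = 1 \<or> i = 2" using assms(2) by auto
  then show ?thesis
    using c by (auto simp: sum_lessThan_3 hp_M_def hp_vec_def g hp_iter_Suc hp_step_def
        hp_a_def hp_b_def fps_of_poly_const fps_X_mult_fps_shift_1[simplified])
qed

lemma hp_A_mult_hp_vec:
  assumes "general_position t" "i < 3"
  shows "(\<Sum>j<3. fps_of_poly (hp_A t n i j) * hp_vec t 0 j)
       = fps_X ^ Suc n * hp_vec t (Suc n) i"
  using assms(2)
proof (induction n arbitrary: i)
  case 0
  then show ?case using hp_M_mult_hp_vec[OF assms(1)] by simp
next
  case (Suc n)
  let ?M = "\<lambda>k. fps_of_poly (hp_M t (Suc n) i k)"
  have "(\<Sum>j<3. fps_of_poly (hp_A t (Suc n) i j) * hp_vec t 0 j)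
      = (\<Sum>k<3. ?M k * (\<Sum>j<3. fps_of_poly (hp_A t n k j) * hp_vec t 0 j))"
    unfolding pmat_mult_def hp_A.simps fps_of_poly_sum fps_of_poly_mult sum_distrib_left
      sum_distrib_right mult.assoc
    by (rule sum.swap)
  also have "\<dots> = fps_X ^ Suc n * (\<Sum>k<3. ?M k * hp_vec t (Suc n) k)"
    using Suc.IH by (simp add: sum_distrib_left mult_ac)
  also have "\<dots> = fps_X ^ Suc (Suc n) * hp_vec t (Suc (Suc n)) i"
    using hp_M_mult_hp_vec[OF assms(1) Suc.prems, of "Suc n"] by (simp add: mult_ac)
  finally show ?case .
qed

lemma pdeg_mult: "pdeg (p * q) = pdeg p + pdeg q"
  by (simp add: pdeg_def degree_mult_eq)

lemma pdeg_eq_ereal_iff: "pdeg p = ereal (real k) \<longleftrightarrow> p \<noteq> 0 \<and> degree p = k"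
  by (simp add: pdeg_def)

lemma hp_a_hp_b_nonzero:
  assumes "general_position t"
  shows "hp_a (hp_iter t n) \<noteq> 0" "hp_b (hp_iter t n) \<noteq> 0"
proof -
  obtain g0 g1 g2 where g: "hp_iter t n = (g0, g1, g2)" by (cases "hp_iter t n")
  show "hp_a (hp_iter t n) \<noteq> 0" "hp_b (hp_iter t n) \<noteq> 0"
    using general_position_const_terms[OF assms g] by (simp_all add: g hp_a_def hp_b_def)
qed

definition hp_deg_step :: "ereal \<times> ereal \<times> ereal \<Rightarrow> ereal \<times> ereal \<times> ereal" where
  "hp_deg_step d = (case d of (d0, d1, d2) \<Rightarrow> (1 + d2, max d0 d1, max d1 d2))"

definition hp_column_degrees :: "triple \<Rightarrow> nat \<Rightarrow> nat \<Rightarrow> ereal \<times> ereal \<times> ereal" where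
  "hp_column_degrees t n j = (pdeg (hp_A t n 0 j), pdeg (hp_A t n 1 j), pdeg (hp_A t n 2 j))"

lemma hp_column_degrees_Suc:
  assumes "general_position t" "j < 3"
  shows "hp_column_degrees t (Suc n) j = hp_deg_step (hp_column_degrees t n j)"
proof -
  have Max: "pdeg (hp_A t (Suc n) i j) = Max ((\<lambda>k. pdeg (hp_M t (Suc n) i k * hp_A t n k j)) ` {..<3})"
    if "i < 3" for i
    using assms that unfolding general_position_def by blast
  have image: "f ` {..<3} = {f 0, f 1, f 2}" for f :: "nat \<Rightarrow> ereal"
    by (auto simp: numeral_3_eq_3 numeral_2_eq_2 lessThan_Suc)
  have Max3: "Max {x, y, z} = max x (max y (z::ereal))"
    by (simp add: max.assoc)
  have pdeg_entries: "pdeg 0 = -\<infinity>" "pdeg 1 = 0" "pdeg [:0, 1:] = 1" "c \<noteq> 0 \<Longrightarrow> pdeg [:c:] = 0"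
    for c :: complex
    by (simp_all add: pdeg_def)
  have minus_infinity_plus_pdeg: "-\<infinity> + pdeg p = -\<infinity>" for p
    by (simp add: pdeg_def)
  show ?thesis
    using Max[of 0] Max[of 1] Max[of 2] hp_a_hp_b_nonzero[OF assms(1), of "Suc n"]
    by (simp add: hp_column_degrees_def hp_deg_step_def hp_M_def image Max3 pdeg_mult
        pdeg_entries minus_infinity_plus_pdeg max.commute)
qed

lemma hp_column_degrees_iterate:
  assumes "general_position t" "j < 3"
  shows "hp_column_degrees t (n + k) j = (hp_deg_step ^^ k) (hp_column_degrees t n j)"
  by (induction k) (simp_all add: hp_column_degrees_Suc[OF assms])

text \<open>Indexed so that column 2 of \<open>A[n]\<close> has profile \<open>n\<close> for \<open>n \<ge> 1\<close>.\<close>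

definition hp_deg_profile :: "nat \<Rightarrow> ereal \<times> ereal \<times> ereal" where
  "hp_deg_profile m =
     (ereal (real (m div 3 + 1)), ereal (real ((m + 2) div 3)), ereal (real ((m + 1) div 3)))"

lemma hp_deg_step_hp_deg_profile: "hp_deg_step (hp_deg_profile m) = hp_deg_profile (Suc m)"
proof -
  define q r where "q = m div 3" and "r = m mod 3"
  have m: "m = r + 3 * q" "r < 3" by (simp_all add: q_def r_def)
  then have "r = 0 \<or> r = 1 \<or> r = 2" by auto
  then have "max (m div 3 + 1) ((m + 2) div 3) = m div 3 + 1"
    "max ((m + 2) div 3) ((m + 1) div 3) = (m + 2) div 3"
    unfolding m(1) by (elim disjE; simp; presburger)+
  then show ?thesis
    by (simp add: hp_deg_step_def hp_deg_profile_def max_def split: if_splits)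
qed

lemma funpow_hp_deg_step_hp_deg_profile: "(hp_deg_step ^^ k) (hp_deg_profile m) = hp_deg_profile (m + k)"
  by (induction k) (simp_all add: hp_deg_step_hp_deg_profile)

lemma hp_column_degrees_1:
  assumes "general_position t"
  shows "hp_column_degrees t 1 0 = (-\<infinity>, 0, 0)" "hp_column_degrees t 1 1 = hp_deg_profile 0"
    "hp_column_degrees t 1 2 = hp_deg_profile 1"
proof -
  have "hp_column_degrees t 0 0 = (-\<infinity>, 0, -\<infinity>)" "hp_column_degrees t 0 1 = (-\<infinity>, 0, 0)"
    "hp_column_degrees t 0 2 = (1, -\<infinity>, 0)"
    using hp_a_hp_b_nonzero[OF assms, of 0]
    by (simp_all add: hp_column_degrees_def hp_M_def pdeg_def)
  then show "hp_column_degrees t 1 0 = (-\<infinity>, 0, 0)" "hp_column_degrees t 1 1 = hp_deg_profile 0"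
    "hp_column_degrees t 1 2 = hp_deg_profile 1"
    using hp_column_degrees_Suc[OF assms, of _ 0]
    by (simp_all add: hp_deg_step_def hp_deg_profile_def)
qed

lemma hp_A_row_2_degrees:
  assumes "general_position t" "n \<ge> 1"
  shows "pdeg (hp_A t n 2 0) = ereal (real ((n - 1) div 3))"
    "pdeg (hp_A t n 2 1) = ereal (real (n div 3))"
    "pdeg (hp_A t n 2 2) = ereal (real ((n + 1) div 3))"
proof -
  obtain m where n: "n = 1 + m" using assms(2) by (metis le_add_diff_inverse)
  note iterate = hp_column_degrees_iterate[OF assms(1), of _ 1 m, folded n]
  note base = hp_column_degrees_1[OF assms(1)]
  have "hp_column_degrees t n 1 = hp_deg_profile m"
    "hp_column_degrees t n 2 = hp_deg_profile (Suc m)"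
    using iterate[of 1] iterate[of 2] unfolding base funpow_hp_deg_step_hp_deg_profile by simp_all
  then show "pdeg (hp_A t n 2 1) = ereal (real (n div 3))"
    "pdeg (hp_A t n 2 2) = ereal (real ((n + 1) div 3))"
    unfolding n by (simp_all add: hp_column_degrees_def hp_deg_profile_def)
  show "pdeg (hp_A t n 2 0) = ereal (real ((n - 1) div 3))"
  proof (cases m)
    case 0
    then show ?thesis using base(1) n by (simp add: hp_column_degrees_def)
  next
    case (Suc k)
    have "hp_deg_step (-\<infinity>, 0, 0) = hp_deg_profile 0"
      by (simp add: hp_deg_step_def hp_deg_profile_def)
    then have "hp_column_degrees t n 0 = hp_deg_profile k"
      using iterate[of 0] unfolding Suc base(1) funpow_Suc_right
      by (simp add: funpow_hp_deg_step_hp_deg_profile)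
    then show ?thesis
      using n Suc by (simp add: hp_column_degrees_def hp_deg_profile_def)
  qed
qed

lemma div_3_sum: "(n + 1) div 3 + n div 3 + (n - 1) div 3 = n - (1::nat)"
proof (cases n)
  case (Suc m)
  define q r where "q = m div 3" and "r = m mod 3"
  have m: "m = r + 3 * q" "r < 3" by (simp_all add: q_def r_def)
  then have "r = 0 \<or> r = 1 \<or> r = 2" by auto
  then show ?thesis unfolding Suc m(1) by (elim disjE) (simp_all, presburger+)
qed simp

theorem corollary1:
  fixes f0 f1 f2 :: "complex fps" and n :: nat
  assumes "general_position (f0, f1, f2)"
    and "n \<ge> 1"
  defines "R1 \<equiv> hp_A (f0, f1, f2) n 2 0"
    and "R2 \<equiv> hp_A (f0, f1, f2) n 2 1"
    and "R3 \<equiv> hp_A (f0, f1, f2) n 2 2"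
  shows "pdeg R3 + pdeg R2 + pdeg R1 = ereal (real n - 1) \<and>
         bigO_z (fps_of_poly R1 * f2 + fps_of_poly R2 * f1 + fps_of_poly R3 * f0) (n + 1) \<and>
         hermite_pade_I [f0, f1, f2] [degree R3, degree R2, degree R1] [R3, R2, R1] \<and>
         degree R3 + degree R2 + degree R1 + 2 = n + 1"
proof -
  note pdegs = hp_A_row_2_degrees[OF assms(1,2), folded R1_def R2_def R3_def]
  have degrees: "R3 \<noteq> 0" "degree R3 + degree R2 + degree R1 = n - 1"
    using pdegs div_3_sum[of n] by (simp_all add: pdeg_eq_ereal_iff)
  have "pdeg R3 + pdeg R2 + pdeg R1 = ereal (real (n - 1))"
    using div_3_sum[of n] by (simp add: pdegs)
  moreover have "bigO_z (fps_of_poly R1 * f2 + fps_of_poly R2 * f1 + fps_of_poly R3 * f0)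
      (n + 1)"
    using hp_A_mult_hp_vec[OF assms(1), of 2 n] bigO_z_fps_X_power_mult[of "Suc n"]
    by (simp del: power_Suc add: sum_lessThan_3 hp_vec_0 R1_def R2_def R3_def)
  moreover have "degree R3 + degree R2 + degree R1 + 2 = n + 1"
    using degrees assms(2) by simp
  ultimately show ?thesis
    using hermite_pade_I_3I[OF degrees(1), of f0 R2 f1 R1 f2] assms(2)
    by (simp add: of_nat_diff add_ac)
qed

end
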